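(* Let $m,n,a$ be natural numbers with $n\geq 1$, $m\geq 1$ and $1\leq a\leq 9$. Then the equation $$C_n = a\left(\frac{10^m-1}{9}\right)$$ holds if and only if $(m,n,a)\in\{(1,1,3),(2,3,9)\}$. That is, the only Lucas-balancing numbers $C_n$ with $n\ge 1$ that are decimal repdigits are $C_1=3$ and $C_3=99$.
   Context: The Lucas-balancing sequence $(C_n)_{n\geq 0}$ is defined by $C_0=1$, $C_1=3$ and $C_{n+1}=6C_n-C_{n-1}$ for $n\geq 1$. For $1\le a\le 9$ and $m\ge 1$, the number $a\frac{10^m-1}{9}$ is the decimal integer consisting of $m$ copies of the digit $a$. *)

theory Defs
  imports Main
begin

fun lucas_bal :: "nat \<Rightarrow> int" where
  "lucas_bal 0 = 1"
| "lucas_bal (Suc 0) = 3"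
| "lucas_bal (Suc (Suc n)) = 6 * lucas_bal (Suc n) - lucas_bal n"

end

theory Submission
  imports Defs
begin

text \<open>
  Modulo 8 the sequence alternates between 1 and 3, and it is never divisible by 5 or 7.
  For \<open>m \<ge> 3\<close> the repunit \<open>(10^m - 1)/9\<close> is \<open>\<equiv> 7 (mod 8)\<close>, because \<open>8\<close> divides \<open>10^m\<close>;
  so \<open>a\<close> times it is \<open>\<equiv> 7a (mod 8)\<close>, which lies in \<open>{1, 3}\<close> only for \<open>a \<in> {5, 7}\<close>,
  and those digits are excluded by the divisibility facts. For \<open>m \<le> 2\<close> the repdigit is at
  most 99, leaving only \<open>C\<^sub>1 = 3\<close>, \<open>C\<^sub>2 = 17\<close>, \<open>C\<^sub>3 = 99\<close> to inspect.
\<close>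

lemma lucas_bal_Suc_Suc_mod:
  "lucas_bal (Suc (Suc n)) mod k = (6 * (lucas_bal (Suc n) mod k) - lucas_bal n mod k) mod k"
proof -
  have "(6 * lucas_bal (Suc n)) mod k = (6 * (lucas_bal (Suc n) mod k)) mod k"
    by (rule mod_mult_right_eq[symmetric])
  then show ?thesis
    by (metis lucas_bal.simps(3) mod_diff_eq mod_diff_left_eq)
qed

lemma lucas_bal_mod_8_pairs:
  "(lucas_bal n mod 8, lucas_bal (Suc n) mod 8) \<in> {(1, 3), (3, 1)}"
  by (induction n) (auto simp only: lucas_bal_Suc_Suc_mod, simp_all)

lemma lucas_bal_mod_5_pairs:
  "(lucas_bal n mod 5, lucas_bal (Suc n) mod 5) \<in> {(1, 3), (3, 2), (2, 4), (4, 2), (2, 3), (3, 1)}"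
  by (induction n) (auto simp only: lucas_bal_Suc_Suc_mod, simp_all)

lemma lucas_bal_mod_7_pairs:
  "(lucas_bal n mod 7, lucas_bal (Suc n) mod 7) \<in> {(1, 3), (3, 3), (3, 1)}"
  by (induction n) (auto simp only: lucas_bal_Suc_Suc_mod, simp_all)

lemma lucas_bal_mod_8: "lucas_bal n mod 8 \<in> {1, 3}"
  using lucas_bal_mod_8_pairs[of n] by auto

lemma lucas_bal_not_5_dvd: "\<not> 5 dvd lucas_bal n"
  using lucas_bal_mod_5_pairs[of n] by (auto simp: dvd_eq_mod_eq_0)

lemma lucas_bal_not_7_dvd: "\<not> 7 dvd lucas_bal n"
  using lucas_bal_mod_7_pairs[of n] by (auto simp: dvd_eq_mod_eq_0)

lemma lucas_bal_pos_less_Suc: "0 < lucas_bal n \<and> lucas_bal n < lucas_bal (Suc n)"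
  by (induction n) simp_all

lemma strict_mono_lucas_bal: "strict_mono lucas_bal"
  using lucas_bal_pos_less_Suc by (simp add: strict_mono_Suc_iff)

lemma lucas_bal_ge_577: "n \<ge> 4 \<Longrightarrow> lucas_bal n \<ge> 577"
  using strict_mono_less_eq[OF strict_mono_lucas_bal, of 4 n]
  by (simp add: numeral_eq_Suc)

lemma repunit_mod_8:
  assumes "m \<ge> 3"
  shows "((10::int) ^ m - 1) div 9 mod 8 = 7"
proof -
  define R :: int where "R = (10 ^ m - 1) div 9"
  have "(10::int) ^ m mod 9 = 1 mod 9"
    using power_mod[of "10::int" 9 m] by simp
  then have R: "9 * R = 10 ^ m - 1"
    unfolding R_def by (intro dvd_mult_div_cancel mod_eq_dvd_iff[THEN iffD1])
  obtain k where "m = k + 3"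
    using assms le_Suc_ex by (metis add.commute)
  then have "(10::int) ^ m = 8 * (125 * 10 ^ k)"
    by (simp add: power_add)
  with R obtain t where "9 * R = 8 * t - 1"
    by auto
  then show ?thesis
    unfolding R_def[symmetric] by presburger
qed

lemma lucas_bal_ne_long_repdigit:
  fixes a :: nat
  assumes "m \<ge> 3" and "a \<le> 9"
  shows "lucas_bal n \<noteq> int a * ((10 ^ m - 1) div 9)"
proof
  assume eq: "lucas_bal n = int a * ((10 ^ m - 1) div 9)"
  then have "lucas_bal n mod 8 = int a * 7 mod 8"
    using repunit_mod_8[OF assms(1)] by (metis mod_mult_right_eq)
  then have "a = 5 \<or> a = 7"
    using lucas_bal_mod_8[of n] assms(2) by (auto simp: le_Suc_eq numeral_eq_Suc)
  then show False
    using eq lucas_bal_not_5_dvd[of n] lucas_bal_not_7_dvd[of n] by auto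
qed

lemma lucas_bal_eq_short_repdigit:
  fixes m n a :: nat
  assumes "n \<ge> 1" and "m \<ge> 1" and "m \<le> 2" and "a \<le> 9"
  shows "lucas_bal n = int a * ((10 ^ m - 1) div 9) \<longleftrightarrow>
         (m, n, a) \<in> {(1, 1, 3), (2, 3, 9)}"
proof -
  have small_values: "lucas_bal 1 = 3" "lucas_bal 2 = 17" "lucas_bal 3 = 99"
    by (simp_all add: numeral_eq_Suc)
  have m: "m = 1 \<or> m = 2"
    using assms(2,3) by auto
  have "n \<le> 3" if "lucas_bal n = int a * ((10 ^ m - 1) div 9)"
  proof -
    have "lucas_bal n \<le> 99"
      using that m assms(4) by auto
    then show ?thesis
      using lucas_bal_ge_577[of n] by fastforce
  qed
  then show ?thesis
    using assms(1,4) m small_values by (auto simp: le_Suc_eq numeral_eq_Suc; presburger)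
qed

theorem theorem3:
  fixes m n a :: nat
  assumes "n \<ge> 1" and "m \<ge> 1" and "1 \<le> a" and "a \<le> 9"
  shows "lucas_bal n = int a * ((10 ^ m - 1) div 9) \<longleftrightarrow>
         (m, n, a) \<in> {(1, 1, 3), (2, 3, 9)}"
proof (cases "m \<ge> 3")
  case True
  then show ?thesis
    using lucas_bal_ne_long_repdigit[OF True assms(4)] by auto
next
  case False
  then show ?thesis
    using lucas_bal_eq_short_repdigit assms by simp
qed

end
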